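(* Let $G$ be a finite simple graph. If $x$ is a minimum cost construction sequence for $G$ (i.e. $\nu(x)=\nu_*(G)$), then $x$ is greedy.
   Context: For a finite simple graph $G=(V,E)$ with $\ell=|V|+|E|$, a construction sequence (c-sequence) is a bijection $x:\{1,\dots,\ell\}\to V\sqcup E$ such that every edge $e=uw$ satisfies $x^{-1}(e)>\max\{x^{-1}(u),x^{-1}(w)\}$. The cost of $x$ is $\nu(x)=\sum_{e=uw\in E}\big(2x^{-1}(e)-x^{-1}(u)-x^{-1}(w)\big)$, and $\nu_*(G)$ is the minimum of $\nu(x)$ over all c-sequences for $G$. A c-sequence $x$ is greedy if for every edge $e=uw$ and every vertex $v\notin\{u,w\}$, either $x^{-1}(v)<\max\{x^{-1}(u),x^{-1}(w)\}$ or $x^{-1}(v)>x^{-1}(e)$. *)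

theory Defs
  imports Main
begin

definition simple_graph :: "'a set \<Rightarrow> 'a set set \<Rightarrow> bool" where
  "simple_graph V E \<longleftrightarrow> finite V \<and>
     (\<forall>e\<in>E. \<exists>u w. u \<noteq> w \<and> u \<in> V \<and> w \<in> V \<and> e = {u, w})"

definition elems :: "'a set \<Rightarrow> 'a set set \<Rightarrow> ('a + 'a set) set" where
  "elems V E = Inl ` V \<union> Inr ` E"

definition pos :: "'a set \<Rightarrow> 'a set set \<Rightarrow> (nat \<Rightarrow> 'a + 'a set) \<Rightarrow> ('a + 'a set) \<Rightarrow> nat" where
  "pos V E x a = inv_into {1..card V + card E} x a"

definition cseq :: "'a set \<Rightarrow> 'a set set \<Rightarrow> (nat \<Rightarrow> 'a + 'a set) \<Rightarrow> bool" where
  "cseq V E x \<longleftrightarrow> bij_betw x {1..card V + card E} (elems V E) \<and>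
     (\<forall>e\<in>E. \<forall>u w. e = {u, w} \<longrightarrow>
        pos V E x (Inr e) > max (pos V E x (Inl u)) (pos V E x (Inl w)))"

definition cost :: "'a set \<Rightarrow> 'a set set \<Rightarrow> (nat \<Rightarrow> 'a + 'a set) \<Rightarrow> int" where
  "cost V E x = (\<Sum>e\<in>E. 2 * int (pos V E x (Inr e)) - (\<Sum>v\<in>e. int (pos V E x (Inl v))))"

definition nu_star :: "'a set \<Rightarrow> 'a set set \<Rightarrow> int" where
  "nu_star V E = Min {cost V E x | x. cseq V E x}"

definition greedy :: "'a set \<Rightarrow> 'a set set \<Rightarrow> (nat \<Rightarrow> 'a + 'a set) \<Rightarrow> bool" where
  "greedy V E x \<longleftrightarrow> (\<forall>e\<in>E. \<forall>u w. e = {u, w} \<longrightarrow> (\<forall>v\<in>V. v \<notin> {u, w} \<longrightarrow>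
      pos V E x (Inl v) < max (pos V E x (Inl u)) (pos V E x (Inl w)) \<or>
      pos V E x (Inl v) > pos V E x (Inr e)))"

end

theory Submission
  imports Defs
begin

text \<open>Suppose a vertex \<open>v\<close> is placed strictly between the later endpoint of an edge \<open>e\<close> and \<open>e\<close>
  itself. Moving \<open>e\<close> to the position of \<open>v\<close>, and every entry from there up to the old position
  of \<open>e\<close> one step later, gives another c-sequence. No vertex moves earlier and \<open>v\<close> moves later;
  since the positions of all entries always sum to \<open>1 + \<dots> + \<ell>\<close>, the edges must then have moved
  earlier in total. As the cost is twice the total edge position minus the total endpoint
  position, it strictly decreases, so a minimum cost c-sequence is greedy.\<close>

lemma simple_graph_edgeE:
  assumes "simple_graph V E" "e \<in> E"
  obtains u w where "u \<noteq> w" "u \<in> V" "w \<in> V" "e = {u, w}"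
  using assms unfolding simple_graph_def by blast

lemma simple_graph_edge_subset: "simple_graph V E \<Longrightarrow> e \<in> E \<Longrightarrow> e \<subseteq> V"
  by (elim simple_graph_edgeE) auto

lemma simple_graph_finite:
  assumes "simple_graph V E"
  shows "finite V" "finite E"
proof -
  show "finite V" using assms unfolding simple_graph_def by blast
  moreover have "E \<subseteq> Pow V" using simple_graph_edge_subset[OF assms] by blast
  ultimately show "finite E" by (meson finite_Pow_iff finite_subset)
qed

lemma cseq_iff:
  assumes "simple_graph V E"
  shows "cseq V E x \<longleftrightarrow> bij_betw x {1..card V + card E} (elems V E) \<and>
           (\<forall>e\<in>E. \<forall>a\<in>e. pos V E x (Inl a) < pos V E x (Inr e))"
proof -
  have "(\<forall>u w. e = {u, w} \<longrightarrow> max (pos V E x (Inl u)) (pos V E x (Inl w)) < pos V E x (Inr e))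
          \<longleftrightarrow> (\<forall>a\<in>e. pos V E x (Inl a) < pos V E x (Inr e))" if e: "e \<in> E" for e
  proof
    obtain u w where "e = {u, w}" using simple_graph_edgeE[OF assms e] by metis
    moreover assume "\<forall>u w. e = {u, w} \<longrightarrow> max (pos V E x (Inl u)) (pos V E x (Inl w)) < pos V E x (Inr e)"
    ultimately show "\<forall>a\<in>e. pos V E x (Inl a) < pos V E x (Inr e)" by auto
  qed auto
  then show ?thesis unfolding cseq_def by auto
qed

lemma bij_betw_pos:
  "cseq V E x \<Longrightarrow> bij_betw (pos V E x) (elems V E) {1..card V + card E}"
  unfolding cseq_def pos_def by (blast intro: bij_betw_inv_into)

lemma cseq_pos_eq_iff:
  "cseq V E x \<Longrightarrow> a \<in> elems V E \<Longrightarrow> b \<in> elems V E \<Longrightarrow> pos V E x a = pos V E x b \<longleftrightarrow> a = b"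
  using bij_betw_pos by (metis bij_betw_iff_bijections)

lemma cseq_pos_mem:
  "cseq V E x \<Longrightarrow> a \<in> elems V E \<Longrightarrow> pos V E x a \<in> {1..card V + card E}"
  using bij_betw_pos bij_betwE by blast

lemma cseq_sum_pos:
  assumes "simple_graph V E" "cseq V E x"
  shows "(\<Sum>v\<in>V. pos V E x (Inl v)) + (\<Sum>e\<in>E. pos V E x (Inr e)) = \<Sum>{1..card V + card E}"
proof -
  have "\<Sum>{1..card V + card E} = (\<Sum>a\<in>elems V E. pos V E x a)"
    using sum.reindex_bij_betw[OF bij_betw_pos[OF assms(2)], of id] by simp
  also have "\<dots> = (\<Sum>a\<in>Inl ` V. pos V E x a) + (\<Sum>a\<in>Inr ` E. pos V E x a)"
    unfolding elems_def using simple_graph_finite[OF assms(1)] by (intro sum.union_disjoint) auto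
  also have "\<dots> = (\<Sum>v\<in>V. pos V E x (Inl v)) + (\<Sum>e\<in>E. pos V E x (Inr e))"
    by (simp add: sum.reindex)
  finally show ?thesis by simp
qed

lemma cost_bounded:
  assumes "simple_graph V E" "cseq V E x"
  shows "\<bar>cost V E x\<bar> \<le> int (card E * (2 * (card V + card E)))"
proof -
  let ?n = "card V + card E"
  have term_bound: "\<bar>2 * int (pos V E x (Inr e)) - (\<Sum>v\<in>e. int (pos V E x (Inl v)))\<bar> \<le> int (2 * ?n)"
    if "e \<in> E" for e
  proof -
    obtain u w where uw: "u \<noteq> w" "u \<in> V" "w \<in> V" "e = {u, w}"
      using simple_graph_edgeE[OF assms(1) \<open>e \<in> E\<close>] .
    then have "Inr e \<in> elems V E" "Inl u \<in> elems V E" "Inl w \<in> elems V E"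
      using that by (auto simp: elems_def)
    then have "pos V E x (Inr e) \<in> {1..?n}" "pos V E x (Inl u) \<in> {1..?n}" "pos V E x (Inl w) \<in> {1..?n}"
      using cseq_pos_mem[OF assms(2)] by blast+
    with uw show ?thesis by auto
  qed
  have "\<bar>cost V E x\<bar> \<le> (\<Sum>e\<in>E. \<bar>2 * int (pos V E x (Inr e)) - (\<Sum>v\<in>e. int (pos V E x (Inl v)))\<bar>)"
    unfolding cost_def by (rule sum_abs)
  also have "\<dots> \<le> of_nat (card E) * int (2 * ?n)"
    using term_bound by (rule sum_bounded_above)
  finally show ?thesis by simp
qed

lemma nu_star_le_cost:
  assumes "simple_graph V E" "cseq V E x"
  shows "nu_star V E \<le> cost V E x"
proof -
  let ?B = "int (card E * (2 * (card V + card E)))"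
  have "{cost V E y | y. cseq V E y} \<subseteq> {-?B..?B}"
    using cost_bounded[OF assms(1)] by (fastforce simp: abs_le_iff)
  then have "finite {cost V E y | y. cseq V E y}" by (rule finite_subset) simp
  then show ?thesis unfolding nu_star_def using assms(2) by (blast intro: Min_le)
qed

text \<open>The entry at position \<open>t\<close> moves to the earlier position \<open>s\<close> and those at \<open>s..t-1\<close> move
  up by one: \<open>move_back s t\<close> sends old positions to new ones, and \<open>x \<circ> move_back_inv s t\<close> is
  the rearranged sequence.\<close>

definition move_back :: "nat \<Rightarrow> nat \<Rightarrow> nat \<Rightarrow> nat" where
  "move_back s t i = (if i = t then s else if s \<le> i \<and> i < t then Suc i else i)"

definition move_back_inv :: "nat \<Rightarrow> nat \<Rightarrow> nat \<Rightarrow> nat" where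
  "move_back_inv s t k = (if k = s then t else if s < k \<and> k \<le> t then k - 1 else k)"

lemma move_back_inv_move_back: "s < t \<Longrightarrow> move_back_inv s t (move_back s t i) = i"
  unfolding move_back_def move_back_inv_def by auto

lemma move_back_move_back_inv: "s < t \<Longrightarrow> move_back s t (move_back_inv s t k) = k"
  unfolding move_back_def move_back_inv_def by auto

lemma move_back_mono: "i < j \<Longrightarrow> i \<noteq> t \<Longrightarrow> j \<noteq> t \<Longrightarrow> move_back s t i < move_back s t j"
  unfolding move_back_def by auto

lemma le_move_back: "i \<noteq> t \<Longrightarrow> i \<le> move_back s t i"
  unfolding move_back_def by auto

lemma move_back_start: "s < t \<Longrightarrow> move_back s t s = Suc s"
  unfolding move_back_def by auto

lemma move_back_mem:
  "1 \<le> s \<Longrightarrow> s < t \<Longrightarrow> t \<le> n \<Longrightarrow> i \<in> {1..n} \<Longrightarrow> move_back s t i \<in> {1..n}"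
  unfolding move_back_def by auto

lemma move_back_inv_mem:
  "1 \<le> s \<Longrightarrow> s < t \<Longrightarrow> t \<le> n \<Longrightarrow> k \<in> {1..n} \<Longrightarrow> move_back_inv s t k \<in> {1..n}"
  unfolding move_back_inv_def by auto

lemma bij_betw_move_back_inv:
  assumes "1 \<le> s" "s < t" "t \<le> n"
  shows "bij_betw (move_back_inv s t) {1..n} {1..n}"
proof (rule bij_betw_byWitness[where f' = "move_back s t"])
  show "move_back_inv s t ` {1..n} \<subseteq> {1..n}" "move_back s t ` {1..n} \<subseteq> {1..n}"
    using move_back_inv_mem[OF assms] move_back_mem[OF assms] by blast+
qed (simp_all add: assms(2) move_back_inv_move_back move_back_move_back_inv)

lemma
  assumes "cseq V E x" "1 \<le> s" "s < t" "t \<le> card V + card E"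
  shows bij_betw_comp_move_back_inv:
      "bij_betw (x \<circ> move_back_inv s t) {1..card V + card E} (elems V E)"
    and pos_comp_move_back_inv:
      "a \<in> elems V E \<Longrightarrow> pos V E (x \<circ> move_back_inv s t) a = move_back s t (pos V E x a)"
proof -
  let ?N = "{1..card V + card E}"
  have x: "bij_betw x ?N (elems V E)" using assms(1) unfolding cseq_def by blast
  show y: "bij_betw (x \<circ> move_back_inv s t) ?N (elems V E)"
    using bij_betw_trans[OF bij_betw_move_back_inv[OF assms(2-4)] x] .
  assume a: "a \<in> elems V E"
  have "pos V E x a \<in> ?N" using cseq_pos_mem[OF assms(1) a] .
  then have in_N: "move_back s t (pos V E x a) \<in> ?N"
    by (rule move_back_mem[OF assms(2-4)])
  have "x (pos V E x a) = a"
    using a x unfolding pos_def by (rule bij_betw_inv_into_right[rotated])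
  then have "(x \<circ> move_back_inv s t) (move_back s t (pos V E x a)) = a"
    using move_back_inv_move_back[OF assms(3)] by simp
  then show "pos V E (x \<circ> move_back_inv s t) a = move_back s t (pos V E x a)"
    unfolding pos_def[of V E "x \<circ> move_back_inv s t"]
    by (rule inv_into_f_eq[OF bij_betw_imp_inj_on[OF y] in_N])
qed

lemma
  assumes x: "cseq V E x" and e: "e \<in> E" and "1 \<le> s" "s < pos V E x (Inr e)" and v: "v \<in> V"
  shows le_pos_move_edge_back:
      "pos V E x (Inl v) \<le> pos V E (x \<circ> move_back_inv s (pos V E x (Inr e))) (Inl v)"
    and less_pos_move_edge_back:
      "pos V E x (Inl v) = s \<Longrightarrow>
         pos V E x (Inl v) < pos V E (x \<circ> move_back_inv s (pos V E x (Inr e))) (Inl v)"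
proof -
  let ?t = "pos V E x (Inr e)"
  have els: "Inl v \<in> elems V E" "Inr e \<in> elems V E" using v e by (auto simp: elems_def)
  have "?t \<le> card V + card E" using cseq_pos_mem[OF x els(2)] by simp
  note pos_y = pos_comp_move_back_inv[OF x \<open>1 \<le> s\<close> \<open>s < ?t\<close> this els(1)]
  have "pos V E x (Inl v) \<noteq> ?t" using cseq_pos_eq_iff[OF x els] by blast
  then show "pos V E x (Inl v) \<le> pos V E (x \<circ> move_back_inv s ?t) (Inl v)"
    unfolding pos_y by (rule le_move_back)
  show "pos V E x (Inl v) < pos V E (x \<circ> move_back_inv s ?t) (Inl v)" if "pos V E x (Inl v) = s"
    unfolding pos_y that move_back_start[OF \<open>s < ?t\<close>] by (rule lessI)
qed

lemma cseq_move_edge_back: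
  assumes G: "simple_graph V E" and x: "cseq V E x" and e: "e \<in> E" and "1 \<le> s"
    and before: "\<forall>v\<in>e. pos V E x (Inl v) < s" and "s < pos V E x (Inr e)"
  shows "cseq V E (x \<circ> move_back_inv s (pos V E x (Inr e)))"
proof -
  define t where "t = pos V E x (Inr e)"
  let ?y = "x \<circ> move_back_inv s t"
  have e_el: "Inr e \<in> elems V E" using e by (simp add: elems_def)
  have "s < t" "t \<le> card V + card E"
    using assms(6) cseq_pos_mem[OF x e_el] unfolding t_def by auto
  note pos_y = pos_comp_move_back_inv[OF x \<open>1 \<le> s\<close> this]
  have "pos V E ?y (Inl v) < pos V E ?y (Inr f)" if f: "f \<in> E" "v \<in> f" for f v
  proof -
    have els: "Inl v \<in> elems V E" "Inr f \<in> elems V E"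
      using f simple_graph_edge_subset[OF G] by (auto simp: elems_def)
    have v_not_t: "pos V E x (Inl v) \<noteq> t"
      using cseq_pos_eq_iff[OF x els(1) e_el] unfolding t_def by simp
    show ?thesis
    proof (cases "f = e")
      case True
      then have "pos V E x (Inl v) < s" using before f(2) by blast
      then show ?thesis using pos_y els True \<open>s < t\<close> unfolding t_def move_back_def by simp
    next
      case False
      then have "pos V E x (Inr f) \<noteq> t"
        using cseq_pos_eq_iff[OF x els(2) e_el] unfolding t_def by simp
      moreover have "pos V E x (Inl v) < pos V E x (Inr f)"
        using x f cseq_iff[OF G] by blast
      ultimately show ?thesis using pos_y els move_back_mono v_not_t by simp
    qed
  qed
  with bij_betw_comp_move_back_inv[OF x \<open>1 \<le> s\<close> \<open>s < t\<close> \<open>t \<le> _\<close>] show ?thesis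
    unfolding cseq_iff[OF G] t_def[symmetric] by blast
qed

lemma cost_eq_sum_edges_minus_sum_endpoints:
  "cost V E x = 2 * (\<Sum>e\<in>E. int (pos V E x (Inr e))) - (\<Sum>e\<in>E. \<Sum>v\<in>e. int (pos V E x (Inl v)))"
  unfolding cost_def by (simp add: sum_subtractf sum_distrib_left)

lemma cost_less_if_vertices_later:
  assumes G: "simple_graph V E" and "cseq V E x" "cseq V E y"
    and later: "\<And>v. v \<in> V \<Longrightarrow> pos V E x (Inl v) \<le> pos V E y (Inl v)"
    and "v \<in> V" "pos V E x (Inl v) < pos V E y (Inl v)"
  shows "cost V E y < cost V E x"
proof -
  have "(\<Sum>v\<in>V. pos V E x (Inl v)) < (\<Sum>v\<in>V. pos V E y (Inl v))"
    using simple_graph_finite(1)[OF G] later assms(5,6) by (intro sum_strict_mono_ex1) auto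
  then have "(\<Sum>e\<in>E. pos V E y (Inr e)) < (\<Sum>e\<in>E. pos V E x (Inr e))"
    using cseq_sum_pos[OF G assms(2)] cseq_sum_pos[OF G assms(3)] by linarith
  then have edges: "(\<Sum>e\<in>E. int (pos V E y (Inr e))) < (\<Sum>e\<in>E. int (pos V E x (Inr e)))"
    by (simp flip: of_nat_sum)
  have endpoints: "(\<Sum>e\<in>E. \<Sum>v\<in>e. int (pos V E x (Inl v))) \<le> (\<Sum>e\<in>E. \<Sum>v\<in>e. int (pos V E y (Inl v)))"
    using simple_graph_edge_subset[OF G] later by (intro sum_mono) auto
  show ?thesis
    using edges endpoints unfolding cost_eq_sum_edges_minus_sum_endpoints by linarith
qed

lemma cheaper_cseq_if_not_greedy:
  assumes G: "simple_graph V E" and x: "cseq V E x" and "\<not> greedy V E x"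
  obtains y where "cseq V E y" "cost V E y < cost V E x"
proof -
  obtain e u w v where e: "e \<in> E" "e = {u, w}" and v: "v \<in> V" "v \<notin> {u, w}"
    and "\<not> pos V E x (Inl v) < max (pos V E x (Inl u)) (pos V E x (Inl w))"
    and "\<not> pos V E x (Inr e) < pos V E x (Inl v)"
    using assms(3) unfolding greedy_def by blast
  moreover have "Inl v \<in> elems V E" "Inl u \<in> elems V E" "Inl w \<in> elems V E" "Inr e \<in> elems V E"
    using e v simple_graph_edge_subset[OF G e(1)] by (auto simp: elems_def)
  ultimately have before: "\<forall>a\<in>e. pos V E x (Inl a) < pos V E x (Inl v)"
    and after: "pos V E x (Inl v) < pos V E x (Inr e)"
    using cseq_pos_eq_iff[OF x] by (auto simp: not_less le_less)
  have "1 \<le> pos V E x (Inl v)" using cseq_pos_mem[OF x] v by (simp add: elems_def)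
  define y where "y = x \<circ> move_back_inv (pos V E x (Inl v)) (pos V E x (Inr e))"
  have "cseq V E y"
    unfolding y_def using cseq_move_edge_back[OF G x e(1) \<open>1 \<le> _\<close> before after] .
  moreover have "cost V E y < cost V E x"
  proof (rule cost_less_if_vertices_later[OF G x \<open>cseq V E y\<close> _ v(1)])
    show "pos V E x (Inl a) \<le> pos V E y (Inl a)" if "a \<in> V" for a
      unfolding y_def using le_pos_move_edge_back[OF x e(1) \<open>1 \<le> _\<close> after that] .
    show "pos V E x (Inl v) < pos V E y (Inl v)"
      unfolding y_def using less_pos_move_edge_back[OF x e(1) \<open>1 \<le> _\<close> after v(1)] by simp
  qed
  ultimately show thesis by (rule that)
qed

theorem lemma1:
  fixes V :: "'a set" and E :: "'a set set" and x :: "nat \<Rightarrow> 'a + 'a set"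
  assumes "simple_graph V E"
    and "cseq V E x"
    and "cost V E x = nu_star V E"
  shows "greedy V E x"
proof (rule ccontr)
  assume "\<not> greedy V E x"
  then obtain y where "cseq V E y" "cost V E y < cost V E x"
    using cheaper_cseq_if_not_greedy[OF assms(1,2)] by blast
  moreover have "cost V E x \<le> cost V E y"
    using assms(3) nu_star_le_cost[OF assms(1) \<open>cseq V E y\<close>] by simp
  ultimately show False by simp
qed

end
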